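(* Let $G$ be a $2$-edge-connected graph and $e\in E(G)$. Then the inequality $x_e\le 1$ defines a facet of $\mathrm{TECSP}(G)$.
   Context: All graphs are finite, simple and undirected. An edge is a bridge if its removal increases the number of connected components. A graph is $2$-edge-connected if it is connected and has no bridges; the empty graph and a single vertex are $2$-edge-connected. $\chi^H\in\{0,1\}^{E(G)}$ is the incidence vector of $E(H)$, and $\mathrm{TECSP}(G)=\mathrm{conv}\{\chi^H : H\subseteq G\text{ is }2\text{-edge-connected}\}\subseteq\mathbb{R}^{E(G)}$. A facet is a face of dimension $\dim(\mathrm{TECSP}(G))-1$. *)

theory Defs
  imports "HOL-Analysis.Analysis"
begin

text \<open>A finite simple graph: vertex set V, edges are the elements of a finite type 'e,
  each edge e has a 2-element set of endpoints ends e contained in V, and ends is injective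
  (no parallel edges).\<close>

definition simple_graph :: "'v set \<Rightarrow> ('e::finite \<Rightarrow> 'v set) \<Rightarrow> bool" where
  "simple_graph V ends \<longleftrightarrow> finite V \<and> inj ends \<and> (\<forall>e. card (ends e) = 2 \<and> ends e \<subseteq> V)"

definition is_subgraph :: "'v set \<Rightarrow> ('e \<Rightarrow> 'v set) \<Rightarrow> 'v set \<Rightarrow> 'e set \<Rightarrow> bool" where
  "is_subgraph V ends W F \<longleftrightarrow> W \<subseteq> V \<and> (\<forall>f\<in>F. ends f \<subseteq> W)"

definition adj :: "('e \<Rightarrow> 'v set) \<Rightarrow> 'e set \<Rightarrow> 'v \<Rightarrow> 'v \<Rightarrow> bool" where
  "adj ends F u v \<longleftrightarrow> (\<exists>f\<in>F. ends f = {u, v})"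

definition reach :: "('e \<Rightarrow> 'v set) \<Rightarrow> 'e set \<Rightarrow> 'v \<Rightarrow> 'v \<Rightarrow> bool" where
  "reach ends F = (adj ends F)\<^sup>*\<^sup>*"

definition connected_graph :: "('e \<Rightarrow> 'v set) \<Rightarrow> 'v set \<Rightarrow> 'e set \<Rightarrow> bool" where
  "connected_graph ends W F \<longleftrightarrow> (\<forall>u\<in>W. \<forall>v\<in>W. reach ends F u v)"

definition components :: "('e \<Rightarrow> 'v set) \<Rightarrow> 'v set \<Rightarrow> 'e set \<Rightarrow> 'v set set" where
  "components ends W F = (\<lambda>u. {v\<in>W. reach ends F u v}) ` W"

definition is_bridge :: "('e \<Rightarrow> 'v set) \<Rightarrow> 'v set \<Rightarrow> 'e set \<Rightarrow> 'e \<Rightarrow> bool" where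
  "is_bridge ends W F f \<longleftrightarrow> f \<in> F \<and>
     card (components ends W (F - {f})) > card (components ends W F)"

text \<open>2-edge-connected: connected and without bridges (empty graph and single vertex included).\<close>
definition two_edge_connected :: "('e \<Rightarrow> 'v set) \<Rightarrow> 'v set \<Rightarrow> 'e set \<Rightarrow> bool" where
  "two_edge_connected ends W F \<longleftrightarrow>
     connected_graph ends W F \<and> (\<forall>f\<in>F. \<not> is_bridge ends W F f)"

definition incidence_vector :: "('e::finite) set \<Rightarrow> real ^ 'e" where
  "incidence_vector F = (\<chi> i. if i \<in> F then 1 else 0)"

definition TECSP :: "'v set \<Rightarrow> ('e::finite \<Rightarrow> 'v set) \<Rightarrow> (real ^ 'e) set" where
  "TECSP V ends = convex hull
     {incidence_vector F | W F. is_subgraph V ends W F \<and> two_edge_connected ends W F}"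

end

theory Submission
  imports Defs
begin

text \<open>
  The inequality \<open>x\<^sub>e \<le> 1\<close> is valid and tight, and the empty subgraph gives the origin, which lies
  off the face; so it suffices that every \<open>\<chi> H\<close> lies in the linear span of the vectors \<open>\<chi> F\<close> of
  2-edge-connected subgraphs \<open>F\<close> containing \<open>e\<close>. If \<open>e \<notin> H\<close> and such an \<open>F\<close> shares a vertex
  with \<open>H\<close>, then \<open>H \<union> F\<close> is again 2-edge-connected, so \<open>\<chi> H - \<chi> (H \<inter> F) = \<chi> (H \<union> F) - \<chi> F\<close>
  lies in the span. These \<open>F\<close> are closed under unions, so by modularity of \<open>\<chi>\<close> the same holds for
  finite intersections of them. Because \<open>G\<close> is 2-edge-connected, for every \<open>f \<in> H\<close> some such \<open>F\<close>
  avoids \<open>f\<close>; intersecting over all \<open>f \<in> H\<close> yields \<open>\<chi> H\<close> itself.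
\<close>

section \<open>Reachability\<close>

lemma adj_sym: "adj ends F u v \<Longrightarrow> adj ends F v u"
  unfolding adj_def by (auto simp: insert_commute)

lemma reach_refl [simp]: "reach ends F u u"
  unfolding reach_def by simp

lemma reach_trans [trans]: "reach ends F u v \<Longrightarrow> reach ends F v w \<Longrightarrow> reach ends F u w"
  unfolding reach_def by (rule rtranclp_trans)

lemma reach_sym: "reach ends F u v \<Longrightarrow> reach ends F v u"
  unfolding reach_def
  by (induction rule: rtranclp_induct) (auto intro: converse_rtranclp_into_rtranclp adj_sym)

lemma reach_edge: "f \<in> F \<Longrightarrow> ends f = {u, v} \<Longrightarrow> reach ends F u v"
  unfolding reach_def adj_def by blast

lemma reach_mono: "reach ends F u v \<Longrightarrow> F \<subseteq> F' \<Longrightarrow> reach ends F' u v"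
  unfolding reach_def adj_def by (erule rtranclp_mono[THEN predicate2D, rotated]) blast

lemma reach_ends_iff:
  "ends f = {a, b} \<Longrightarrow> (\<forall>x\<in>ends f. \<forall>y\<in>ends f. reach ends F x y) \<longleftrightarrow> reach ends F a b"
  by (auto dest: reach_sym)

lemma reach_Diff_edge_eq:
  assumes "\<forall>x\<in>ends f. \<forall>y\<in>ends f. reach ends (F - {f}) x y"
  shows "reach ends (F - {f}) = reach ends F"
proof (intro ext iffI)
  fix u v assume "reach ends F u v"
  then show "reach ends (F - {f}) u v"
    unfolding reach_def
  proof (induction rule: rtranclp_induct)
    case (step y z)
    then obtain k where k: "k \<in> F" "ends k = {y, z}" unfolding adj_def by blast
    show ?case
    proof (cases "k = f")
      case True
      then have "reach ends (F - {f}) y z" using assms k by auto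
      with step.IH show ?thesis unfolding reach_def by (rule rtranclp_trans)
    next
      case False
      then have "adj ends (F - {f}) y z" using k unfolding adj_def by blast
      with step.IH show ?thesis by (rule rtranclp.rtrancl_into_rtrancl)
    qed
  qed simp
qed (erule reach_mono, blast)

lemma reach_Diff_edge_from_end:
  assumes "reach ends F c w" "c \<in> ends h"
  shows "\<exists>d\<in>ends h. reach ends (F - {h}) d w"
  using assms(1) unfolding reach_def
proof (induction rule: rtranclp_induct)
  case (step x y)
  then obtain d where d: "d \<in> ends h" "(adj ends (F - {h}))\<^sup>*\<^sup>* d x" by blast
  obtain k where k: "k \<in> F" "ends k = {x, y}" using step(2) unfolding adj_def by blast
  show ?case
  proof (cases "k = h")
    case False
    then have "adj ends (F - {h}) x y" using k unfolding adj_def by blast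
    then show ?thesis using d by (meson rtranclp.rtrancl_into_rtrancl)
  qed (use k in auto)
qed (use assms(2) in auto)

lemma reach_Diff_edge_or_ends:
  assumes "reach ends F a x"
  shows "reach ends (F - {h}) a x \<or> (\<forall>d\<in>ends h. reach ends F a d)"
  using assms unfolding reach_def
proof (induction rule: rtranclp_induct)
  case (step x y)
  obtain k where k: "k \<in> F" "ends k = {x, y}" using step(2) unfolding adj_def by blast
  show ?case
  proof (cases "k = h")
    case True
    have "(adj ends F)\<^sup>*\<^sup>* a y" using step(1,2) by (rule rtranclp.rtrancl_into_rtrancl)
    then show ?thesis using k True step(1) by auto
  next
    case False
    then have "adj ends (F - {h}) x y" using k unfolding adj_def by blast
    then show ?thesis using step(3) by (meson rtranclp.rtrancl_into_rtrancl)
  qed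
qed simp

lemma reach_crossing_edge:
  assumes "reach ends F x y" "x \<in> A" "y \<notin> A"
  obtains k a b where "k \<in> F" "ends k = {a, b}" "a \<in> A" "b \<notin> A"
proof -
  have "y \<notin> A \<longrightarrow> (\<exists>k\<in>F. \<exists>a b. ends k = {a, b} \<and> a \<in> A \<and> b \<notin> A)"
    using assms(1) unfolding reach_def
  proof (induction rule: rtranclp_induct)
    case (step y z)
    then show ?case unfolding adj_def by blast
  qed (use assms(2) in blast)
  then show ?thesis using assms(3) that by blast
qed

lemma reach_minimal_edge_set:
  assumes "reach ends F a b" "finite F"
  obtains P where "P \<subseteq> F" "reach ends P a b" "\<forall>h\<in>P. \<not> reach ends (P - {h}) a b"
proof -
  obtain P where P: "P \<subseteq> F \<and> reach ends P a b"
    and least: "\<And>Q. Q \<subseteq> F \<and> reach ends Q a b \<Longrightarrow> card P \<le> card Q"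
    using ex_has_least_nat[of "\<lambda>Q. Q \<subseteq> F \<and> reach ends Q a b" F card] assms(1) by blast
  have "\<not> reach ends (P - {h}) a b" if "h \<in> P" for h
  proof
    assume "reach ends (P - {h}) a b"
    then have "card P \<le> card (P - {h})"
      using P by (intro least) auto
    moreover have "finite P"
      using P assms(2) finite_subset by blast
    ultimately show False
      using card_Diff1_less[of P h] that by simp
  qed
  with P that show ?thesis by blast
qed

lemma minimal_path_reach_ends:
  assumes "reach ends P a b" "\<forall>h\<in>P. \<not> reach ends (P - {h}) a b" "h \<in> P" "x \<in> ends h"
  shows "reach ends P a x"
  using reach_Diff_edge_or_ends[OF assms(1), of h] assms(2-4) by blast

lemma minimal_path_edge_detour:
  assumes path: "reach ends P a b" and minimal: "\<forall>h\<in>P. \<not> reach ends (P - {h}) a b"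
    and "h \<in> P" "x \<in> ends h"
  obtains d d' where "d \<in> ends h" "d' \<in> ends h" "d \<noteq> d'"
    "reach ends (P - {h}) d a" "reach ends (P - {h}) d' b"
proof -
  have xa: "reach ends P x a"
    using reach_sym[OF minimal_path_reach_ends[OF assms]] .
  obtain d where d: "d \<in> ends h" "reach ends (P - {h}) d a"
    using reach_Diff_edge_from_end[OF xa \<open>x \<in> ends h\<close>] by blast
  obtain d' where d': "d' \<in> ends h" "reach ends (P - {h}) d' b"
    using reach_Diff_edge_from_end[OF reach_trans[OF xa path] \<open>x \<in> ends h\<close>] by blast
  have "d \<noteq> d'"
  proof
    assume "d = d'"
    then have "reach ends (P - {h}) a b"
      using reach_trans[OF reach_sym[OF d(2)]] d'(2) by simp
    with minimal \<open>h \<in> P\<close> show False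
      by blast
  qed
  with d d' that show ?thesis
    by blast
qed

section \<open>Bridges\<close>

lemma card_components_Diff_edge_gt:
  assumes "finite W" "f \<in> F" "ends f = {a, b}" "a \<in> W" "b \<in> W"
    and "\<not> reach ends (F - {f}) a b"
  shows "card (components ends W F) < card (components ends W (F - {f}))"
proof -
  define comp where "comp F' u = {v\<in>W. reach ends F' u v}" for F' u
  define merge where "merge C = {v\<in>W. \<exists>u\<in>C. reach ends F u v}" for C
  have merge_comp: "merge (comp (F - {f}) u) = comp F u" if "u \<in> W" for u
  proof -
    have "reach ends F u v" if "reach ends (F - {f}) u u'" "reach ends F u' v" for u' v
      using reach_trans[OF reach_mono[OF that(1)] that(2)] by blast
    then show ?thesis
      unfolding merge_def comp_def using \<open>u \<in> W\<close> by auto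
  qed
  have ab: "reach ends F a b" and ba: "reach ends F b a"
    using reach_edge[where ends=ends, OF assms(2,3)] by (auto intro: reach_sym)
  have eq: "comp F a = comp F b"
    unfolding comp_def using reach_trans[OF ab] reach_trans[OF ba] by blast
  have ne: "comp (F - {f}) a \<noteq> comp (F - {f}) b"
  proof -
    have "b \<in> comp (F - {f}) b" "b \<notin> comp (F - {f}) a"
      using assms(5,6) unfolding comp_def by simp_all
    then show ?thesis by blast
  qed
  have "\<not> inj_on merge (comp (F - {f}) ` W)"
  proof
    assume "inj_on merge (comp (F - {f}) ` W)"
    moreover have "merge (comp (F - {f}) a) = merge (comp (F - {f}) b)"
      using merge_comp assms(4,5) eq by simp
    ultimately have "comp (F - {f}) a = comp (F - {f}) b"
      by (rule inj_onD) (use assms(4,5) in simp_all)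
    with ne show False ..
  qed
  then have card_lt: "card (merge ` comp (F - {f}) ` W) < card (comp (F - {f}) ` W)"
    using assms(1) card_image_le[of "comp (F - {f}) ` W" merge] inj_on_iff_eq_card
    by (metis finite_imageI le_neq_implies_less)
  moreover have merge_image: "merge ` comp (F - {f}) ` W = comp F ` W"
    unfolding image_image using merge_comp by simp
  moreover have "components ends W F' = comp F' ` W" for F'
    unfolding components_def comp_def ..
  ultimately show ?thesis
    by (simp only:)
qed

lemma is_bridge_iff:
  assumes "finite W" "f \<in> F" "ends f = {a, b}" "ends f \<subseteq> W"
  shows "is_bridge ends W F f \<longleftrightarrow> \<not> reach ends (F - {f}) a b"
proof
  assume bridge: "is_bridge ends W F f"
  show "\<not> reach ends (F - {f}) a b"
  proof
    assume "reach ends (F - {f}) a b"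
    then have "reach ends (F - {f}) = reach ends F"
      by (intro reach_Diff_edge_eq) (simp add: reach_ends_iff[where ends=ends, OF assms(3)])
    with bridge show False
      unfolding is_bridge_def components_def by simp
  qed
next
  assume "\<not> reach ends (F - {f}) a b"
  then show "is_bridge ends W F f"
    unfolding is_bridge_def using assms card_components_Diff_edge_gt[of W f F ends a b] by simp
qed

lemma two_edge_connected_iff_reach:
  assumes "finite W" "\<forall>f\<in>F. card (ends f) = 2 \<and> ends f \<subseteq> W"
  shows "two_edge_connected ends W F \<longleftrightarrow> connected_graph ends W F \<and>
           (\<forall>f\<in>F. \<forall>x\<in>ends f. \<forall>y\<in>ends f. reach ends (F - {f}) x y)"
proof -
  have "\<not> is_bridge ends W F f \<longleftrightarrow> (\<forall>x\<in>ends f. \<forall>y\<in>ends f. reach ends (F - {f}) x y)"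
    if "f \<in> F" for f
  proof -
    obtain a b where ab: "ends f = {a, b}"
      using assms(2) \<open>f \<in> F\<close> card_2_iff by metis
    show ?thesis
      using is_bridge_iff[where ends=ends, OF assms(1) that ab] assms(2) that reach_ends_iff[where ends=ends, OF ab]
      by simp
  qed
  then show ?thesis
    unfolding two_edge_connected_def by blast
qed

lemma incidence_vector_nth: "incidence_vector F $ i = (if i \<in> F then 1 else 0)"
  unfolding incidence_vector_def by simp

lemma incidence_vector_empty: "incidence_vector {} = 0"
  unfolding incidence_vector_def by (simp add: vec_eq_iff)

lemma incidence_vector_Int:
  "incidence_vector (A \<inter> B) = incidence_vector A + incidence_vector B - incidence_vector (A \<union> B)"
  unfolding incidence_vector_def by (simp add: vec_eq_iff)

lemma span_incidence_vector_diff_Inter: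
  assumes "finite K" "K \<subseteq> Z" "\<And>A B. A \<in> Z \<Longrightarrow> B \<in> Z \<Longrightarrow> A \<union> B \<in> Z"
    and "\<And>A. A \<in> Z \<Longrightarrow> incidence_vector H - incidence_vector (H \<inter> A) \<in> span S"
  shows "incidence_vector H - incidence_vector (H \<inter> \<Inter>K) \<in> span S"
proof -
  define d where "d A = incidence_vector H - incidence_vector (H \<inter> A)" for A
  have d_Int: "d (A \<inter> B) = d A + d B - d (A \<union> B)" for A B
    unfolding d_def using incidence_vector_Int[of "H \<inter> A" "H \<inter> B"]
    by (simp add: Int_Un_distrib Int_assoc Int_left_commute)
  \<comment> \<open>Generalised over a set \<open>Y\<close> joined to every member of \<open>K\<close>, so that the induction hypothesis
    also covers the family \<open>(Y \<union> z) \<union> k\<close>; the claim is the case \<open>Y = {}\<close>.\<close>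
  have "\<forall>Y \<in> insert {} Z. d (\<Inter>k\<in>K. Y \<union> k) \<in> span S"
    using assms(1,2)
  proof (induction K rule: finite_induct)
    case empty
    show ?case
      unfolding d_def by (simp add: span_zero)
  next
    case (insert z K)
    show ?case
    proof
      fix Y assume "Y \<in> insert {} Z"
      then have Yz: "Y \<union> z \<in> Z"
        using insert.prems assms(3) by auto
      have "(Y \<union> z) \<union> (\<Inter>k\<in>K. Y \<union> k) = (\<Inter>k\<in>K. (Y \<union> z) \<union> k)"
        by auto
      then have "d (\<Inter>k\<in>insert z K. Y \<union> k) =
          d (Y \<union> z) + d (\<Inter>k\<in>K. Y \<union> k) - d (\<Inter>k\<in>K. (Y \<union> z) \<union> k)"
        using d_Int by simp
      also have "\<dots> \<in> span S"
      proof (intro span_diff span_add)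
        show "d (Y \<union> z) \<in> span S"
          unfolding d_def by (rule assms(4)[OF Yz])
        show "d (\<Inter>k\<in>K. Y \<union> k) \<in> span S" "d (\<Inter>k\<in>K. (Y \<union> z) \<union> k) \<in> span S"
          using insert.IH insert.prems \<open>Y \<in> insert {} Z\<close> Yz by blast+
      qed
      finally show "d (\<Inter>k\<in>insert z K. Y \<union> k) \<in> span S" .
    qed
  qed
  then show ?thesis
    unfolding d_def by simp
qed

section \<open>Two-edge-connected subgraphs\<close>

locale finite_graph =
  fixes V :: "'v set" and ends :: "'e::finite \<Rightarrow> 'v set"
  assumes finite_V: "finite V"
    and card_ends: "card (ends f) = 2"
    and ends_subset: "ends f \<subseteq> V"
begin

definition tec_subgraph :: "'v set \<Rightarrow> 'e set \<Rightarrow> bool" where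
  "tec_subgraph W F \<longleftrightarrow> W \<subseteq> V \<and> (\<forall>f\<in>F. ends f \<subseteq> W) \<and> connected_graph ends W F \<and>
     (\<forall>f\<in>F. \<forall>x\<in>ends f. \<forall>y\<in>ends f. reach ends (F - {f}) x y)"

lemma tec_subgraph_iff:
  "is_subgraph V ends W F \<and> two_edge_connected ends W F \<longleftrightarrow> tec_subgraph W F"
proof -
  have "finite W" if "W \<subseteq> V"
    using finite_V that by (rule finite_subset[rotated])
  then show ?thesis
    unfolding tec_subgraph_def is_subgraph_def
    using two_edge_connected_iff_reach[of W F ends] card_ends by blast
qed

lemma ends_doubletonE:
  obtains a b where "ends f = {a, b}" "a \<noteq> b"
  using card_ends[of f] card_2_iff by metis

lemma ends_eq_doubleton: "x \<in> ends f \<Longrightarrow> y \<in> ends f \<Longrightarrow> x \<noteq> y \<Longrightarrow> ends f = {x, y}"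
  by (rule ends_doubletonE[of f]) auto

lemma tec_subgraph_Union:
  assumes tec: "\<And>i. i \<in> I \<Longrightarrow> tec_subgraph (W i) (F i)" and z: "\<And>i. i \<in> I \<Longrightarrow> z \<in> W i"
  shows "tec_subgraph (\<Union>i\<in>I. W i) (\<Union>i\<in>I. F i)"
proof -
  have reach_z: "reach ends (\<Union>i\<in>I. F i) z x" if "x \<in> W i" "i \<in> I" for x i
  proof -
    have "reach ends (F i) z x"
      using tec[OF \<open>i \<in> I\<close>] z[OF \<open>i \<in> I\<close>] \<open>x \<in> W i\<close>
      unfolding tec_subgraph_def connected_graph_def by blast
    then show ?thesis
      by (rule reach_mono) (use \<open>i \<in> I\<close> in blast)
  qed
  have "W i \<subseteq> V" "\<forall>f\<in>F i. ends f \<subseteq> W i" if "i \<in> I" for i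
    using tec[OF that] unfolding tec_subgraph_def by simp_all
  then have "(\<Union>i\<in>I. W i) \<subseteq> V" "\<forall>f\<in>(\<Union>i\<in>I. F i). ends f \<subseteq> (\<Union>i\<in>I. W i)"
    by blast+
  moreover have "connected_graph ends (\<Union>i\<in>I. W i) (\<Union>i\<in>I. F i)"
    unfolding connected_graph_def using reach_trans[OF reach_sym[OF reach_z] reach_z] by blast
  moreover have "reach ends ((\<Union>i\<in>I. F i) - {f}) x y"
    if "f \<in> F i" "i \<in> I" "x \<in> ends f" "y \<in> ends f" for f x y i
  proof -
    have "reach ends (F i - {f}) x y"
      using tec[OF \<open>i \<in> I\<close>] that unfolding tec_subgraph_def by blast
    then show ?thesis
      by (rule reach_mono) (use \<open>i \<in> I\<close> in blast)
  qed
  ultimately show ?thesis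
    unfolding tec_subgraph_def by simp
qed

lemma tec_subgraph_Un:
  assumes "tec_subgraph W1 F1" "tec_subgraph W2 F2" "z \<in> W1" "z \<in> W2"
  shows "tec_subgraph (W1 \<union> W2) (F1 \<union> F2)"
proof -
  have "tec_subgraph (\<Union>b. if b then W1 else W2) (\<Union>b. if b then F1 else F2)"
    by (rule tec_subgraph_Union[where z=z]) (use assms in auto)
  then show ?thesis
    by (simp only: UN_bool_eq if_True if_False)
qed

lemma tec_subgraph_through_edge:
  assumes "g \<in> F" "ends g = {a, b}" "reach ends (F - {g}) a b"
  obtains W0 F0 where "tec_subgraph W0 F0" "g \<in> F0" "F0 \<subseteq> F"
proof -
  obtain P where P: "P \<subseteq> F - {g}" "reach ends P a b"
    and minimal: "\<forall>h\<in>P. \<not> reach ends (P - {h}) a b"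
    using reach_minimal_edge_set[OF assms(3) finite] by blast
  define F0 where "F0 = insert g P"
  define W0 where "W0 = (\<Union>h\<in>F0. ends h)"
  have reach_a: "reach ends P a x" if "x \<in> W0" for x
    using that P(2) minimal_path_reach_ends[OF P(2) minimal] assms(2)
    unfolding W0_def F0_def by auto
  have "reach ends F0 x y" if "x \<in> W0" "y \<in> W0" for x y
    using reach_trans[OF reach_sym[OF reach_a[OF that(1)]] reach_a[OF that(2)]]
    by (rule reach_mono) (auto simp: F0_def)
  moreover have "reach ends (F0 - {h}) x y" if "h \<in> F0" "x \<in> ends h" "y \<in> ends h" for h x y
  proof (cases "h = g")
    case True
    moreover have "F0 - {g} = P"
      using P(1) unfolding F0_def by blast
    ultimately show ?thesis
      using P(2) reach_ends_iff[of ends g a b] assms(2) that by auto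
  next
    case False
    then have "h \<in> P"
      using \<open>h \<in> F0\<close> unfolding F0_def by blast
    then obtain d d' where d: "d \<in> ends h" "d' \<in> ends h" "d \<noteq> d'"
      and da: "reach ends (P - {h}) d a" and d'b: "reach ends (P - {h}) d' b"
      using minimal_path_edge_detour[OF P(2) minimal _ \<open>x \<in> ends h\<close>] by blast
    have sub: "P - {h} \<subseteq> F0 - {h}" and g: "g \<in> F0 - {h}"
      using False unfolding F0_def by auto
    have "reach ends (F0 - {h}) d a"
      using da sub by (rule reach_mono)
    also have "reach ends (F0 - {h}) a b"
      using g assms(2) by (rule reach_edge)
    also have "reach ends (F0 - {h}) b d'"
      using reach_sym[OF d'b] sub by (rule reach_mono)
    finally show ?thesis
      using reach_ends_iff[where ends=ends, OF ends_eq_doubleton[OF d]] that by blast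
  qed
  moreover have "W0 \<subseteq> V" "\<forall>h\<in>F0. ends h \<subseteq> W0"
    using ends_subset unfolding W0_def by blast+
  ultimately have "tec_subgraph W0 F0"
    unfolding tec_subgraph_def connected_graph_def by blast
  moreover have "g \<in> F0" "F0 \<subseteq> F"
    using assms(1) P(1) unfolding F0_def by auto
  ultimately show ?thesis
    using that by blast
qed

lemma greatest_tec_subgraph_avoiding:
  assumes "tec_subgraph W0 F0" "e \<in> F0" "f \<notin> F0"
  obtains W F where "tec_subgraph W F" "e \<in> F" "f \<notin> F"
    and "\<And>W' F'. tec_subgraph W' F' \<Longrightarrow> e \<in> F' \<Longrightarrow> f \<notin> F' \<Longrightarrow> F' \<subseteq> F"
proof -
  define I where "I = {(W, F). tec_subgraph W F \<and> e \<in> F \<and> f \<notin> F}"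
  obtain u v where "ends e = {u, v}"
    by (rule ends_doubletonE)
  then have "u \<in> fst i" if "i \<in> I" for i
    using that unfolding I_def tec_subgraph_def by auto
  then have "tec_subgraph (\<Union>i\<in>I. fst i) (\<Union>i\<in>I. snd i)"
    by (intro tec_subgraph_Union) (auto simp: I_def)
  moreover have "e \<in> (\<Union>i\<in>I. snd i)" "f \<notin> (\<Union>i\<in>I. snd i)"
    using assms unfolding I_def by force+
  moreover have "F' \<subseteq> (\<Union>i\<in>I. snd i)" if "tec_subgraph W' F'" "e \<in> F'" "f \<notin> F'" for W' F'
    using that unfolding I_def by force
  ultimately show ?thesis
    using that by blast
qed

end

locale two_edge_connected_graph = finite_graph +
  assumes tec_subgraph_whole: "tec_subgraph V UNIV"
begin

lemma reach_Diff_edge_whole: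
  assumes "x \<in> V" "y \<in> V"
  shows "reach ends (UNIV - {h}) x y"
proof -
  have "reach ends UNIV x y" "\<forall>a\<in>ends h. \<forall>b\<in>ends h. reach ends (UNIV - {h}) a b"
    using tec_subgraph_whole assms unfolding tec_subgraph_def connected_graph_def by blast+
  then show ?thesis
    using reach_Diff_edge_eq by metis
qed

lemma reach_Diff_two_edges:
  assumes "tec_subgraph W F" "f \<in> F" "h \<notin> F" "x \<in> V" "y \<in> V"
  shows "reach ends (UNIV - {h} - {f}) x y"
proof -
  have "reach ends (F - {f}) a b" if "a \<in> ends f" "b \<in> ends f" for a b
    using assms(1,2) that unfolding tec_subgraph_def by blast
  then have "\<forall>a\<in>ends f. \<forall>b\<in>ends f. reach ends (UNIV - {h} - {f}) a b"
    using assms(3) by (blast intro: reach_mono)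
  then show ?thesis
    using reach_Diff_edge_eq reach_Diff_edge_whole[OF assms(4,5)] by metis
qed

lemma edge_leaving_greatest_tec_subgraph:
  assumes H: "tec_subgraph WH FH" "f \<in> FH"
    and K: "tec_subgraph K KF" "e \<in> KF" "f \<notin> KF"
    and greatest: "\<And>W' F'. tec_subgraph W' F' \<Longrightarrow> e \<in> F' \<Longrightarrow> f \<notin> F' \<Longrightarrow> F' \<subseteq> KF"
    and k: "k \<noteq> f" "ends k = {a, b}" "a \<in> K" "b \<notin> K"
  shows "k \<in> FH"
proof (rule ccontr)
  assume "k \<notin> FH"
  moreover have "a \<in> V" "b \<in> V"
    using ends_subset[of k] k(2) by auto
  moreover have "(UNIV - {f}) - {k} = UNIV - {k} - {f}"
    by blast
  ultimately have "reach ends ((UNIV - {f}) - {k}) a b"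
    using reach_Diff_two_edges[OF H] by simp
  then obtain WC FC where C: "tec_subgraph WC FC" "k \<in> FC" "FC \<subseteq> UNIV - {f}"
    using tec_subgraph_through_edge[of k "UNIV - {f}"] k(1,2) by blast
  then have "a \<in> WC"
    using k(2) unfolding tec_subgraph_def by blast
  then have "tec_subgraph (K \<union> WC) (KF \<union> FC)"
    using tec_subgraph_Un[OF K(1) C(1) k(3)] by blast
  then have "k \<in> KF"
    using greatest K C by blast
  then show False
    using K(1) k(2,4) unfolding tec_subgraph_def by blast
qed

lemma tec_subgraph_avoiding_edge:
  assumes H: "tec_subgraph WH FH" "e \<notin> FH" "f \<in> FH"
  obtains W F where "tec_subgraph W F" "e \<in> F" "f \<notin> F" "W \<inter> WH \<noteq> {}"
proof -
  obtain u v where uv: "ends e = {u, v}"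
    by (rule ends_doubletonE)
  have "reach ends ((UNIV - {f}) - {e}) u v"
    using reach_Diff_two_edges[OF H(1,3,2)] uv ends_subset[of e]
    by (simp add: Diff_insert2[symmetric] insert_commute)
  then obtain W0 F0 where Z0: "tec_subgraph W0 F0" "e \<in> F0" "F0 \<subseteq> UNIV - {f}"
    using tec_subgraph_through_edge[of e "UNIV - {f}" u v] uv H by blast
  have "f \<notin> F0"
    using Z0(3) by blast
  obtain K KF where K: "tec_subgraph K KF" "e \<in> KF" "f \<notin> KF"
    and greatest: "\<And>W' F'. tec_subgraph W' F' \<Longrightarrow> e \<in> F' \<Longrightarrow> f \<notin> F' \<Longrightarrow> F' \<subseteq> KF"
    using greatest_tec_subgraph_avoiding[OF Z0(1,2) \<open>f \<notin> F0\<close>] by blast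
  have "K \<inter> WH \<noteq> {}"
  proof
    assume disjoint: "K \<inter> WH = {}"
    obtain p where "p \<in> ends f"
      using ends_doubletonE[of f] by blast
    then have p: "p \<in> WH" "p \<in> V"
      using H(1,3) unfolding tec_subgraph_def by blast+
    have u: "u \<in> K"
      using K uv unfolding tec_subgraph_def by blast
    have "reach ends (UNIV - {f}) u p"
      using reach_Diff_edge_whole p(2) K u unfolding tec_subgraph_def by blast
    moreover note u
    moreover have "p \<notin> K"
      using p(1) disjoint by blast
    ultimately obtain k a b where k: "k \<in> UNIV - {f}" "ends k = {a, b}" "a \<in> K" "b \<notin> K"
      by (rule reach_crossing_edge)
    then have "k \<in> FH"
      using edge_leaving_greatest_tec_subgraph[OF H(1,3) K, of k a b] greatest by blast
    then have "a \<in> WH"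
      using H(1) k(2) unfolding tec_subgraph_def by blast
    with k(3) disjoint show False
      by blast
  qed
  with K that show ?thesis
    by blast
qed

lemma incidence_vector_in_span:
  assumes H: "tec_subgraph WH FH" "e \<notin> FH"
  shows "incidence_vector FH \<in> span {incidence_vector F | W F. tec_subgraph W F \<and> e \<in> F}"
proof -
  let ?S = "{incidence_vector F | W F. tec_subgraph W F \<and> e \<in> F}"
  define Z where "Z = {F. \<exists>W. tec_subgraph W F \<and> e \<in> F \<and> W \<inter> WH \<noteq> {}}"
  obtain u v where uv: "ends e = {u, v}"
    by (rule ends_doubletonE)
  have union_closed: "A \<union> B \<in> Z" if AB: "A \<in> Z" "B \<in> Z" for A B
  proof -
    obtain WA WB where "tec_subgraph WA A" "tec_subgraph WB B" "e \<in> A" "e \<in> B" "WA \<inter> WH \<noteq> {}"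
      using AB unfolding Z_def by blast
    moreover have "u \<in> WA" "u \<in> WB"
      using calculation uv unfolding tec_subgraph_def by blast+
    ultimately show ?thesis
      unfolding Z_def using tec_subgraph_Un by blast
  qed
  have diff_span: "incidence_vector FH - incidence_vector (FH \<inter> A) \<in> span ?S" if A: "A \<in> Z" for A
  proof -
    obtain W z where W: "tec_subgraph W A" "e \<in> A" "z \<in> W" "z \<in> WH"
      using A unfolding Z_def by blast
    then have "tec_subgraph (WH \<union> W) (FH \<union> A)"
      using tec_subgraph_Un H(1) by blast
    then have "incidence_vector (FH \<union> A) - incidence_vector A \<in> span ?S"
      using W by (blast intro: span_diff span_base)
    then show ?thesis
      by (simp add: incidence_vector_Int)
  qed
  have "\<forall>f\<in>FH. \<exists>A. A \<in> Z \<and> f \<notin> A"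
  proof
    fix f assume "f \<in> FH"
    obtain W F where "tec_subgraph W F" "e \<in> F" "f \<notin> F" "W \<inter> WH \<noteq> {}"
      by (rule tec_subgraph_avoiding_edge[OF H \<open>f \<in> FH\<close>])
    then show "\<exists>A. A \<in> Z \<and> f \<notin> A"
      unfolding Z_def by blast
  qed
  then obtain Y where Y: "\<forall>f\<in>FH. Y f \<in> Z \<and> f \<notin> Y f"
    by (rule bchoice[THEN exE])
  have "incidence_vector FH - incidence_vector (FH \<inter> \<Inter>(Y ` FH)) \<in> span ?S"
    by (rule span_incidence_vector_diff_Inter[OF _ _ union_closed diff_span]) (use Y in auto)
  moreover have "FH \<inter> \<Inter>(Y ` FH) = {}"
    using Y by blast
  ultimately show ?thesis
    by (simp add: incidence_vector_empty)
qed

lemma TECSP_eq: "TECSP V ends = convex hull {incidence_vector F | W F. tec_subgraph W F}"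
  unfolding TECSP_def tec_subgraph_iff ..

end

lemma two_edge_connected_graphI:
  assumes "simple_graph V ends" "two_edge_connected ends V UNIV"
  shows "two_edge_connected_graph V ends"
proof -
  interpret finite_graph V ends
    using assms(1) unfolding simple_graph_def by unfold_locales auto
  have "is_subgraph V ends V UNIV"
    unfolding is_subgraph_def using ends_subset by blast
  then have "tec_subgraph V UNIV"
    using assms(2) tec_subgraph_iff by blast
  then show ?thesis
    by unfold_locales
qed

section \<open>The facet\<close>

lemma facet_of_convex_hull_supporting_hyperplane:
  fixes S :: "'a::euclidean_space set"
  assumes le: "\<And>x. x \<in> S \<Longrightarrow> a \<bullet> x \<le> b" and "0 \<in> S" "b \<noteq> 0"
    and "S \<inter> {x. a \<bullet> x = b} \<noteq> {}" and spanning: "S \<subseteq> span (S \<inter> {x. a \<bullet> x = b})"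
  shows "(\<forall>x\<in>convex hull S. a \<bullet> x \<le> b) \<and> (convex hull S \<inter> {x. a \<bullet> x = b}) facet_of convex hull S"
proof -
  let ?P = "convex hull S" and ?S1 = "S \<inter> {x. a \<bullet> x = b}"
  have P_le: "\<forall>x\<in>?P. a \<bullet> x \<le> b"
    using hull_minimal[of S "{x. a \<bullet> x \<le> b}" convex] le convex_halfspace_le by blast
  then have face: "(?P \<inter> {x. a \<bullet> x = b}) face_of ?P"
    by (intro face_of_Int_supporting_hyperplane_le) auto
  have S_P: "S \<subseteq> ?P"
    by (rule hull_subset)
  then have S1_face: "?S1 \<subseteq> ?P \<inter> {x. a \<bullet> x = b}"
    by blast
  have "0 \<in> ?P" "0 \<notin> ?P \<inter> {x. a \<bullet> x = b}"
    using \<open>0 \<in> S\<close> \<open>b \<noteq> 0\<close> S_P by auto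
  then have "?P \<inter> {x. a \<bullet> x = b} \<noteq> ?P"
    by blast
  then have "aff_dim (?P \<inter> {x. a \<bullet> x = b}) < aff_dim ?P"
    using face by (intro face_of_aff_dim_lt) simp_all
  moreover have "aff_dim ?P \<le> aff_dim (?P \<inter> {x. a \<bullet> x = b}) + 1"
  proof -
    have "affine hull (insert 0 ?S1) = span ?S1"
      using affine_hull_insert_span_gen[of 0 ?S1] by simp
    then have "aff_dim S \<le> aff_dim (affine hull (insert 0 ?S1))"
      using spanning by (intro aff_dim_subset) simp
    also have "\<dots> = aff_dim (insert 0 ?S1)"
      by (rule aff_dim_affine_hull)
    also have "\<dots> \<le> aff_dim ?S1 + 1"
      by (simp add: aff_dim_insert)
    also have "\<dots> \<le> aff_dim (?P \<inter> {x. a \<bullet> x = b}) + 1"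
      using aff_dim_subset[OF S1_face] by simp
    finally show ?thesis
      by (simp add: aff_dim_convex_hull)
  qed
  ultimately show ?thesis
    unfolding facet_of_def using P_le face S1_face assms(4) by auto
qed

theorem mainTheorem6:
  fixes V :: "'v set" and ends :: "'e::finite \<Rightarrow> 'v set" and e :: 'e
  assumes "simple_graph V ends"
    and "two_edge_connected ends V UNIV"
  shows "(\<forall>x\<in>TECSP V ends. x $ e \<le> 1) \<and>
         (TECSP V ends \<inter> {x. x $ e = 1}) facet_of (TECSP V ends)"
proof -
  interpret two_edge_connected_graph V ends
    using assms by (rule two_edge_connected_graphI)
  define S where "S = {incidence_vector F | W F. tec_subgraph W F}"
  have coord: "axis e 1 \<bullet> x = x $ e" for x :: "real ^ 'e"
    by (simp add: inner_axis')
  have S1: "S \<inter> {x. axis e 1 \<bullet> x = 1} = {incidence_vector F | W F. tec_subgraph W F \<and> e \<in> F}"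
    unfolding S_def coord by (auto simp: incidence_vector_nth split: if_splits; blast)
  have "(\<forall>x\<in>convex hull S. axis e 1 \<bullet> x \<le> 1) \<and>
        (convex hull S \<inter> {x. axis e 1 \<bullet> x = 1}) facet_of convex hull S"
  proof (rule facet_of_convex_hull_supporting_hyperplane)
    show "axis e 1 \<bullet> x \<le> 1" if "x \<in> S" for x
      using that unfolding S_def coord by (auto simp: incidence_vector_nth)
    have "tec_subgraph {} {}"
      unfolding tec_subgraph_def connected_graph_def by simp
    then show "0 \<in> S"
      unfolding S_def incidence_vector_empty[symmetric] by blast
    show "S \<inter> {x. axis e 1 \<bullet> x = 1} \<noteq> {}"
      unfolding S1 using tec_subgraph_whole by blast
    show "S \<subseteq> span (S \<inter> {x. axis e 1 \<bullet> x = 1})"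
      unfolding S1 unfolding S_def using incidence_vector_in_span by (blast intro: span_base)
  qed simp
  then show ?thesis
    unfolding TECSP_eq S_def coord .
qed

end
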